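(* Let $\alpha\in(0,1)$ and $n\ge1$. For every configuration $w\in\mathcal{W}_{2n}$, $$(1+n)^\alpha\le\phi_\alpha(w)\le(2n)^{\alpha+1},$$ and the lower bound is attained if and only if $E(w)=0$.
   Context: A configuration of length $m$ is a word $w=w_1\cdots w_m$ over $\{1,2\}$ with $|w|_1=|w|_2$; $\mathcal{W}_m$ is the set of such words. $E(w)$ is the number of indices $i$ with $w_i=w_{i+1}$ (mismatches). Dyck factors: write $w=p\cdot v\cdot s$ with $v=v_1\cdots v_k$ a nonempty factor (occurring at a given position). $v$ is a positive Dyck factor of height $|p|_1-|p|_2$ if $|v|_1=|v|_2$, $|v_1\cdots v_i|_1\ge|v_1\cdots v_i|_2$ for all $1\le i\le k$, and $|p|_1-|p|_2\ge0$. A negative Dyck factor is defined by exchanging the letters $1$ and $2$ in these three conditions. A Dyck factor is maximal if no Dyck factor with the same height contains it. For $\alpha\in(0,1)$, $\phi_\alpha(w)=\sum_{v\in\mathrm{DF}(w)}(1+|v|_1)^\alpha$, where $\mathrm{DF}(w)$ is the set of (occurrences of) maximal Dyck factors of $w$. *)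

theory Defs
  imports Complex_Main
begin

text \<open>Words over {1,2} are lists of naturals. Positions are 0-indexed.
  An occurrence of a factor is a pair (i,k): it starts after the prefix
  p = take i w and is v = take k (drop i w).\<close>

definition cnt :: "nat \<Rightarrow> nat list \<Rightarrow> nat" where
  "cnt a xs = length (filter (\<lambda>x. x = a) xs)"

definition configs :: "nat \<Rightarrow> nat list set" where
  "configs m = {w. set w \<subseteq> {1,2} \<and> length w = m \<and> cnt 1 w = cnt 2 w}"

definition mismatches :: "nat list \<Rightarrow> nat" where
  "mismatches w = card {i. i + 1 < length w \<and> w ! i = w ! (i + 1)}"

definition factor :: "nat list \<Rightarrow> nat \<Rightarrow> nat \<Rightarrow> nat list" where
  "factor w i k = take k (drop i w)"

definition height :: "nat list \<Rightarrow> nat \<Rightarrow> int" where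
  "height w i = int (cnt 1 (take i w)) - int (cnt 2 (take i w))"

definition pos_dyck_factor :: "nat list \<Rightarrow> nat \<Rightarrow> nat \<Rightarrow> bool" where
  "pos_dyck_factor w i k \<longleftrightarrow> 1 \<le> k \<and> i + k \<le> length w \<and>
     cnt 1 (factor w i k) = cnt 2 (factor w i k) \<and>
     (\<forall>j\<in>{1..k}. cnt 1 (take j (factor w i k)) \<ge> cnt 2 (take j (factor w i k))) \<and>
     cnt 1 (take i w) \<ge> cnt 2 (take i w)"

definition neg_dyck_factor :: "nat list \<Rightarrow> nat \<Rightarrow> nat \<Rightarrow> bool" where
  "neg_dyck_factor w i k \<longleftrightarrow> 1 \<le> k \<and> i + k \<le> length w \<and>
     cnt 2 (factor w i k) = cnt 1 (factor w i k) \<and>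
     (\<forall>j\<in>{1..k}. cnt 2 (take j (factor w i k)) \<ge> cnt 1 (take j (factor w i k))) \<and>
     cnt 2 (take i w) \<ge> cnt 1 (take i w)"

definition dyck_factor :: "nat list \<Rightarrow> nat \<Rightarrow> nat \<Rightarrow> bool" where
  "dyck_factor w i k \<longleftrightarrow> pos_dyck_factor w i k \<or> neg_dyck_factor w i k"

definition maximal_dyck_factor :: "nat list \<Rightarrow> nat \<Rightarrow> nat \<Rightarrow> bool" where
  "maximal_dyck_factor w i k \<longleftrightarrow> dyck_factor w i k \<and>
     \<not> (\<exists>i' k'. dyck_factor w i' k' \<and> height w i' = height w i \<and>
            i' \<le> i \<and> i + k \<le> i' + k' \<and> (i', k') \<noteq> (i, k))"

definition DF :: "nat list \<Rightarrow> (nat \<times> nat) set" where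
  "DF w = {(i, k). maximal_dyck_factor w i k}"

definition phi :: "real \<Rightarrow> nat list \<Rightarrow> real" where
  "phi \<alpha> w = (\<Sum>(i, k)\<in>DF w. (1 + real (cnt 1 (factor w i k))) powr \<alpha>)"

end

theory Submission
  imports Defs
begin

text \<open>Maximal Dyck factors starting at the same position coincide, so there are at most 2n
  of them, each with at most n letters 1; this gives the upper bound. The maximal Dyck factors
  of height 0 cover the word, hence contain all n letters 1 between them, and strict
  subadditivity of t \<mapsto> t powr \<alpha> yields the lower bound, with equality only if the
  whole word is the unique maximal Dyck factor. This happens exactly for alternating words: a
  repeated letter inside a Dyck word opens a Dyck factor of non-zero height.\<close>

section \<open>Letter counts and heights\<close>

lemma cnt_append [simp]: "cnt a (xs @ ys) = cnt a xs + cnt a ys"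
  by (simp add: cnt_def)

lemma cnt_take_le: "cnt a (take k xs) \<le> cnt a xs"
  using cnt_append[of a "take k xs" "drop k xs"] by simp

lemma cnt_factor_le: "cnt a (factor w i k) \<le> cnt a w"
  unfolding factor_def using cnt_take_le cnt_append[of a "take i w" "drop i w"]
  by (metis append_take_drop_id le_add2 le_trans)

lemma cnt_take_eq_card: "m \<le> length w \<Longrightarrow> cnt a (take m w) = card {p. p < m \<and> w ! p = a}"
  unfolding cnt_def length_filter_conv_card by (rule arg_cong[where f = card]) auto

lemma cnt_factor_eq_card:
  assumes "i + k \<le> length w"
  shows "cnt a (factor w i k) = card {p. i \<le> p \<and> p < i + k \<and> w ! p = a}"
proof -
  have split: "{p. p < i + k \<and> w ! p = a} = {p. p < i \<and> w ! p = a} \<union> {p. i \<le> p \<and> p < i + k \<and> w ! p = a}"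
    by auto
  have "card {p. p < i + k \<and> w ! p = a} =
      card {p. p < i \<and> w ! p = a} + card {p. i \<le> p \<and> p < i + k \<and> w ! p = a}"
    unfolding split by (rule card_Un_disjoint) auto
  moreover have "cnt a (take (i + k) w) = cnt a (take i w) + cnt a (factor w i k)"
    by (simp add: factor_def take_add)
  ultimately show ?thesis
    using cnt_take_eq_card[of "i + k" w a] cnt_take_eq_card[of i w a] assms by simp
qed

lemma cnt_1_add_cnt_2: "set xs \<subseteq> {1, 2} \<Longrightarrow> cnt 1 xs + cnt 2 xs = length xs"
  by (induction xs) (auto simp: cnt_def)

lemma mem_configsD:
  assumes "w \<in> configs (2 * n)"
  shows "set w \<subseteq> {1, 2}" "length w = 2 * n" "cnt 1 w = n" "height w (length w) = 0"
proof -
  have w: "set w \<subseteq> {1, 2}" "length w = 2 * n" "cnt 1 w = cnt 2 w"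
    using assms by (auto simp: configs_def)
  then show "set w \<subseteq> {1, 2}" "length w = 2 * n" by simp_all
  show "cnt 1 w = n" "height w (length w) = 0"
    using cnt_1_add_cnt_2[OF w(1)] w(2,3) by (auto simp: height_def)
qed

lemma height_0 [simp]: "height w 0 = 0"
  by (simp add: height_def cnt_def)

lemma height_factor:
  "t \<le> k \<Longrightarrow> height w (i + t) = height w i + height (factor w i k) t"
  by (simp add: height_def factor_def take_add min_absorb1)

lemma height_factor_length: "height (factor w i k) k = int (cnt 1 (factor w i k)) - int (cnt 2 (factor w i k))"
  by (simp add: height_def factor_def)

lemma height_Suc_cases:
  assumes "set w \<subseteq> {1, 2}" and "m < length w"
  shows "height w (Suc m) = height w m + 1 \<and> w ! m = 1 \<or> height w (Suc m) = height w m - 1 \<and> w ! m = 2"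
proof -
  have "w ! m \<in> {1, 2}" using assms nth_mem by blast
  then show ?thesis using assms(2) by (auto simp: height_def take_Suc_conv_app_nth cnt_def)
qed

section \<open>Dyck factors in terms of heights\<close>

lemma pos_dyck_factor_iff_height:
  "pos_dyck_factor w i k \<longleftrightarrow> 1 \<le> k \<and> i + k \<le> length w \<and> height w (i + k) = height w i \<and>
     (\<forall>t\<in>{1..k}. height w i \<le> height w (i + t)) \<and> 0 \<le> height w i"
proof -
  have "cnt 2 (take t (factor w i k)) \<le> cnt 1 (take t (factor w i k)) \<longleftrightarrow>
      height w i \<le> height w (i + t)" if "t \<le> k" for t
    using height_factor[OF that, of w i] by (simp add: height_def)
  moreover have "cnt 1 (factor w i k) = cnt 2 (factor w i k) \<longleftrightarrow> height w (i + k) = height w i"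
    using height_factor[of k k w i] height_factor_length[of w i k] by simp
  moreover have "cnt 2 (take i w) \<le> cnt 1 (take i w) \<longleftrightarrow> 0 \<le> height w i"
    by (simp add: height_def)
  ultimately show ?thesis
    unfolding pos_dyck_factor_def by (metis (no_types, lifting) atLeastAtMost_iff)
qed

text \<open>Exchanging the letters turns negative Dyck factors into positive ones, so statements
  about negative factors are obtained from the positive case.\<close>

definition swap_letters :: "nat list \<Rightarrow> nat list" where
  "swap_letters = map (\<lambda>x. 3 - x)"

lemma cnt_swap_letters:
  "cnt 1 (swap_letters xs) = cnt 2 xs" "cnt 2 (swap_letters xs) = cnt 1 xs"
  by (induction xs) (auto simp: cnt_def swap_letters_def)

lemma take_swap_letters [simp]: "take i (swap_letters xs) = swap_letters (take i xs)"
  by (simp add: swap_letters_def take_map)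

lemma factor_swap_letters [simp]: "factor (swap_letters w) i k = swap_letters (factor w i k)"
  by (simp add: factor_def swap_letters_def take_map drop_map)

lemma length_swap_letters [simp]: "length (swap_letters w) = length w"
  by (simp add: swap_letters_def)

lemma height_swap_letters [simp]: "height (swap_letters w) i = - height w i"
  unfolding height_def take_swap_letters cnt_swap_letters by simp

lemma set_swap_letters: "set w \<subseteq> {1, 2} \<Longrightarrow> set (swap_letters w) \<subseteq> {1, 2}"
  by (auto simp: swap_letters_def)

lemma neg_dyck_factor_iff_swap_letters:
  "neg_dyck_factor w i k \<longleftrightarrow> pos_dyck_factor (swap_letters w) i k"
  unfolding neg_dyck_factor_def pos_dyck_factor_def
  by (simp only: factor_swap_letters take_swap_letters cnt_swap_letters length_swap_letters)

lemma neg_dyck_factor_iff_height: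
  "neg_dyck_factor w i k \<longleftrightarrow> 1 \<le> k \<and> i + k \<le> length w \<and> height w (i + k) = height w i \<and>
     (\<forall>t\<in>{1..k}. height w (i + t) \<le> height w i) \<and> height w i \<le> 0"
  unfolding neg_dyck_factor_iff_swap_letters pos_dyck_factor_iff_height by auto

text \<open>The factor closes at the first return of the height to its starting value.\<close>

lemma pos_dyck_factor_from_up_step:
  assumes w: "set w \<subseteq> {1, 2}" and nonneg: "0 \<le> height w i"
    and up: "height w (Suc i) = height w i + 1"
    and m: "i < m" "m \<le> length w" "height w m \<le> height w i"
  shows "\<exists>k. pos_dyck_factor w i k"
proof -
  define P where "P j \<longleftrightarrow> i < j \<and> j \<le> length w \<and> height w j \<le> height w i" for j
  obtain l where l: "P l" and below: "\<And>j. j < l \<Longrightarrow> \<not> P j"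
    using m exists_least_iff[of P] unfolding P_def by blast
  have above: "height w i < height w j" if "i < j" "j < l" for j
    using below[OF that(2)] l that by (auto simp: P_def)
  have "l \<noteq> Suc i" using l up by (auto simp: P_def)
  then obtain q where q: "l = Suc q" "i < q" using l by (cases l) (auto simp: P_def)
  have "height w l \<ge> height w q - 1"
    using height_Suc_cases[OF w, of q] l q by (auto simp: P_def)
  then have return: "height w l = height w i" using above[of q] l q by (auto simp: P_def)
  have "pos_dyck_factor w i (l - i)"
    unfolding pos_dyck_factor_iff_height
  proof (intro conjI ballI)
    fix t assume "t \<in> {1..l - i}"
    then have "i < i + t" "i + t \<le> l" using q by auto
    then show "height w i \<le> height w (i + t)"
      using above[of "i + t"] return by (cases "i + t = l") auto
  qed (use l q return nonneg in \<open>auto simp: P_def\<close>)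
  then show ?thesis ..
qed

lemma dyck_factor_from_zero_height:
  assumes w: "set w \<subseteq> {1, 2}" and "height w (length w) = 0"
    and j: "j < length w" "height w j = 0"
  shows "\<exists>k. dyck_factor w j k"
  using height_Suc_cases[OF w j(1)]
proof
  assume "height w (Suc j) = height w j + 1 \<and> w ! j = 1"
  then have "\<exists>k. pos_dyck_factor w j k"
    using pos_dyck_factor_from_up_step[OF w, of j "length w"] assms by auto
  then show ?thesis by (auto simp: dyck_factor_def)
next
  assume "height w (Suc j) = height w j - 1 \<and> w ! j = 2"
  then have "\<exists>k. pos_dyck_factor (swap_letters w) j k"
    using pos_dyck_factor_from_up_step[OF set_swap_letters[OF w], of j "length w"] assms by auto
  then show ?thesis by (auto simp: dyck_factor_def neg_dyck_factor_iff_swap_letters)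
qed

section \<open>Maximal Dyck factors\<close>

lemma dyck_factor_bounds: "dyck_factor w i k \<Longrightarrow> 1 \<le> k \<and> i + k \<le> length w"
  by (auto simp: dyck_factor_def pos_dyck_factor_def neg_dyck_factor_def)

lemma mem_DF_iff [simp]: "(i, k) \<in> DF w \<longleftrightarrow> maximal_dyck_factor w i k"
  by (simp add: DF_def)

lemma maximal_dyck_factor_unique:
  assumes "maximal_dyck_factor w i k" and "dyck_factor w i' k'" and "height w i' = height w i"
    and "i' \<le> i" and "i + k \<le> i' + k'"
  shows "i' = i \<and> k' = k"
  using assms unfolding maximal_dyck_factor_def by blast

lemma maximal_dyck_factor_exists:
  assumes "dyck_factor w i k"
  obtains i' k' where "maximal_dyck_factor w i' k'" "height w i' = height w i"
    "i' \<le> i" "i + k \<le> i' + k'"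
proof -
  define P where "P = (\<lambda>(a, b). dyck_factor w a b \<and> height w a = height w i \<and> a \<le> i \<and> i + k \<le> a + b)"
  have "P (i, k)" using assms by (simp add: P_def)
  moreover have "\<forall>y. P y \<longrightarrow> snd y < Suc (length w)"
    using dyck_factor_bounds by (fastforce simp: P_def)
  ultimately obtain a b where ab: "P (a, b)" and longest: "\<And>y. P y \<Longrightarrow> snd y \<le> b"
    using ex_has_greatest_nat[of P "(i, k)" snd "Suc (length w)"] by fastforce
  have "maximal_dyck_factor w a b"
    unfolding maximal_dyck_factor_def
  proof (intro conjI notI)
    show "dyck_factor w a b" using ab by (simp add: P_def)
    assume "\<exists>i' k'. dyck_factor w i' k' \<and> height w i' = height w a \<and> i' \<le> a \<and> a + b \<le> i' + k'
      \<and> (i', k') \<noteq> (a, b)"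
    then obtain i' k' where "dyck_factor w i' k'" "height w i' = height w a" "i' \<le> a"
      "a + b \<le> i' + k'" "(i', k') \<noteq> (a, b)"
      by blast
    moreover from this have "P (i', k')" using ab by (auto simp: P_def)
    ultimately show False using longest[of "(i', k')"] by auto
  qed
  then show ?thesis using that ab by (auto simp: P_def)
qed

lemma finite_DF: "finite (DF w)"
proof (rule finite_subset)
  show "DF w \<subseteq> {0..length w} \<times> {0..length w}"
    using dyck_factor_bounds by (fastforce simp: DF_def maximal_dyck_factor_def)
qed simp

text \<open>Two maximal Dyck factors starting at the same position have the same height,
  so one contains the other and they coincide.\<close>

lemma inj_on_fst_DF: "inj_on fst (DF w)"
proof (rule inj_onI)
  fix x y assume "x \<in> DF w" "y \<in> DF w" "fst x = fst y"
  then obtain i k k' where x: "x = (i, k)" and y: "y = (i, k')"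
    and max: "maximal_dyck_factor w i k" "maximal_dyck_factor w i k'"
    by (metis mem_DF_iff prod.collapse)
  then have "dyck_factor w i k" "dyck_factor w i k'"
    by (simp_all add: maximal_dyck_factor_def)
  then show "x = y"
    using maximal_dyck_factor_unique[OF max(1), of i k'] maximal_dyck_factor_unique[OF max(2), of i k] x y
    by (cases "k \<le> k'") auto
qed

lemma card_DF_le_length: "card (DF w) \<le> length w"
proof -
  have "fst ` DF w \<subseteq> {..<length w}"
    using dyck_factor_bounds by (fastforce simp: DF_def maximal_dyck_factor_def)
  then have "card (fst ` DF w) \<le> length w"
    using card_mono[of "{..<length w}"] by fastforce
  then show ?thesis using card_image[OF inj_on_fst_DF] by simp
qed

lemma DF_covers:
  assumes w: "set w \<subseteq> {1, 2}" and balanced: "height w (length w) = 0" and p: "p < length w"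
  obtains i k where "(i, k) \<in> DF w" "height w i = 0" "i \<le> p" "p < i + k"
proof -
  define P where "P j \<longleftrightarrow> j \<le> p \<and> height w j = 0" for j
  have "P 0" "\<forall>y. P y \<longrightarrow> y < Suc p" by (auto simp: P_def)
  then obtain j where j: "P j" and last: "\<And>y. P y \<Longrightarrow> y \<le> j"
    using ex_has_greatest_nat[of P 0 id "Suc p"] by auto
  then obtain k where k: "dyck_factor w j k"
    using dyck_factor_from_zero_height[OF w balanced, of j] p by (auto simp: P_def)
  then have "height w (j + k) = 0"
    using j by (auto simp: P_def dyck_factor_def pos_dyck_factor_iff_height neg_dyck_factor_iff_height)
  then have "p < j + k"
    using last[of "j + k"] dyck_factor_bounds[OF k] by (fastforce simp: P_def)
  obtain i' k' where "maximal_dyck_factor w i' k'" "height w i' = height w j" "i' \<le> j" "j + k \<le> i' + k'"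
    using maximal_dyck_factor_exists[OF k] .
  then show ?thesis
    using that[of i' k'] j \<open>p < j + k\<close> by (auto simp: P_def)
qed

definition DF_zero :: "nat list \<Rightarrow> (nat \<times> nat) set" where
  "DF_zero w = {(i, k) \<in> DF w. height w i = 0}"

lemma finite_DF_zero: "finite (DF_zero w)"
  using finite_DF by (rule finite_subset[rotated]) (auto simp: DF_zero_def)

lemma DF_zero_nonempty:
  assumes "set w \<subseteq> {1, 2}" "height w (length w) = 0" "w \<noteq> []"
  shows "DF_zero w \<noteq> {}"
proof -
  obtain i k where "(i, k) \<in> DF w" "height w i = 0" "i \<le> 0" "0 < i + k"
    by (rule DF_covers[OF assms(1,2), of 0]) (use assms(3) in auto)
  then have "(i, k) \<in> DF_zero w" by (simp add: DF_zero_def)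
  then show ?thesis by blast
qed

lemma cnt_le_sum_DF_zero:
  assumes w: "set w \<subseteq> {1, 2}" and balanced: "height w (length w) = 0"
  shows "cnt 1 w \<le> (\<Sum>(i, k)\<in>DF_zero w. cnt 1 (factor w i k))"
proof -
  define B where "B = (\<lambda>(i, k). {p. i \<le> p \<and> p < i + k \<and> w ! p = 1})"
  have "cnt 1 w = card {p. p < length w \<and> w ! p = 1}"
    using cnt_take_eq_card[of "length w" w 1] by simp
  also have "\<dots> \<le> card (\<Union>s\<in>DF_zero w. B s)"
  proof (rule card_mono)
    show "finite (\<Union>s\<in>DF_zero w. B s)"
      using finite_DF_zero by (auto simp: B_def)
    show "{p. p < length w \<and> w ! p = 1} \<subseteq> (\<Union>s\<in>DF_zero w. B s)"
    proof
      fix p assume p: "p \<in> {p. p < length w \<and> w ! p = 1}"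
      then obtain i k where "(i, k) \<in> DF w" "height w i = 0" "i \<le> p" "p < i + k"
        using DF_covers[OF w balanced, of p] by blast
      then show "p \<in> (\<Union>s\<in>DF_zero w. B s)"
        using p by (intro UN_I[of "(i, k)"]) (auto simp: B_def DF_zero_def)
    qed
  qed
  also have "\<dots> \<le> (\<Sum>s\<in>DF_zero w. card (B s))"
    by (rule card_UN_le[OF finite_DF_zero])
  also have "\<dots> = (\<Sum>(i, k)\<in>DF_zero w. cnt 1 (factor w i k))"
  proof (rule sum.cong)
    fix s assume "s \<in> DF_zero w"
    then obtain i k where "s = (i, k)" "dyck_factor w i k"
      by (auto simp: DF_zero_def maximal_dyck_factor_def)
    then show "card (B s) = (case s of (i, k) \<Rightarrow> cnt 1 (factor w i k))"
      using dyck_factor_bounds cnt_factor_eq_card by (simp add: B_def)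
  qed simp
  finally show ?thesis .
qed

section \<open>Subadditivity of powers\<close>

lemma powr_add_less:
  fixes x y a :: real
  assumes "0 < a" "a < 1" "0 < x" "0 < y"
  shows "(x + y) powr a < x powr a + y powr a"
proof -
  have x: "(x + y) powr (a - 1) < x powr (a - 1)" and y: "(x + y) powr (a - 1) < y powr (a - 1)"
    using assms by (auto intro!: powr_less_mono2_neg)
  have mult: "z powr a = z * z powr (a - 1)" if "0 < z" for z :: real
    using that powr_mult_base[of z "a - 1"] by simp
  have "(x + y) powr a = x * (x + y) powr (a - 1) + y * (x + y) powr (a - 1)"
    using assms by (simp add: mult distrib_right)
  also have "\<dots> < x * x powr (a - 1) + y * y powr (a - 1)"
    using assms x y by (intro add_strict_mono mult_strict_left_mono)
  also have "\<dots> = x powr a + y powr a"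
    using assms by (simp add: mult)
  finally show ?thesis .
qed

lemma powr_one_plus_sum_le:
  fixes g :: "'a \<Rightarrow> real"
  assumes a: "0 < a" "a < 1" and "finite S" "S \<noteq> {}" and g: "\<And>s. s \<in> S \<Longrightarrow> 0 \<le> g s"
  shows "(1 + sum g S) powr a \<le> (\<Sum>s\<in>S. (1 + g s) powr a)"
  using assms(3,4) g
proof (induction S rule: finite_ne_induct)
  case (insert x F)
  have "0 \<le> sum g F" using insert by (simp add: sum_nonneg)
  then have "(1 + sum g (insert x F)) powr a \<le> ((1 + g x) + (1 + sum g F)) powr a"
    using insert a by (intro powr_mono2) auto
  also have "\<dots> \<le> (1 + g x) powr a + (1 + sum g F) powr a"
    using insert.prems[of x] \<open>0 \<le> sum g F\<close> by (intro less_imp_le powr_add_less[OF a]) auto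
  also have "\<dots> \<le> (1 + g x) powr a + (\<Sum>s\<in>F. (1 + g s) powr a)"
    using insert by simp
  finally show ?case using insert by simp
qed simp

lemma powr_one_plus_sum_less:
  fixes g :: "'a \<Rightarrow> real"
  assumes a: "0 < a" "a < 1" and "finite S" "2 \<le> card S" and g: "\<And>s. s \<in> S \<Longrightarrow> 0 \<le> g s"
  shows "(1 + sum g S) powr a < (\<Sum>s\<in>S. (1 + g s) powr a)"
proof -
  obtain x where x: "x \<in> S" using assms(4) by fastforce
  have not_singleton: "\<not> S \<subseteq> {x}"
    using card_mono[of "{x}" S] assms(4) by auto
  define F where "F = S - {x}"
  have F: "S = insert x F" "x \<notin> F" "finite F" "F \<noteq> {}"
    using assms(3) x not_singleton by (auto simp: F_def)
  have "0 \<le> sum g F" using F g by (simp add: sum_nonneg)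
  then have "(1 + sum g S) powr a \<le> ((1 + g x) + (1 + sum g F)) powr a"
    using F a g by (intro powr_mono2) auto
  also have "\<dots> < (1 + g x) powr a + (1 + sum g F) powr a"
    using F g[of x] \<open>0 \<le> sum g F\<close> by (intro powr_add_less[OF a]) auto
  also have "\<dots> \<le> (1 + g x) powr a + (\<Sum>s\<in>F. (1 + g s) powr a)"
    using powr_one_plus_sum_le[OF a F(3,4)] F g by simp
  finally show ?thesis using F by simp
qed

lemma phi_le_length_mult:
  assumes "0 \<le> \<alpha>"
  shows "phi \<alpha> w \<le> real (length w) * (1 + real (cnt 1 w)) powr \<alpha>"
proof -
  have "phi \<alpha> w \<le> real (card (DF w)) * (1 + real (cnt 1 w)) powr \<alpha>"
    unfolding phi_def
    by (rule sum_bounded_above) (auto intro!: powr_mono2 simp: assms cnt_factor_le)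
  also have "\<dots> \<le> real (length w) * (1 + real (cnt 1 w)) powr \<alpha>"
    using card_DF_le_length by (intro mult_right_mono) auto
  finally show ?thesis .
qed

lemma powr_cnt_le_sum_DF_zero:
  assumes a: "0 < \<alpha>" "\<alpha> < 1"
    and w: "set w \<subseteq> {1, 2}" "height w (length w) = 0" "w \<noteq> []"
  shows "(1 + real (cnt 1 w)) powr \<alpha> \<le> (\<Sum>(i, k)\<in>DF_zero w. (1 + real (cnt 1 (factor w i k))) powr \<alpha>)"
    and "2 \<le> card (DF_zero w) \<Longrightarrow>
      (1 + real (cnt 1 w)) powr \<alpha> < (\<Sum>(i, k)\<in>DF_zero w. (1 + real (cnt 1 (factor w i k))) powr \<alpha>)"
proof -
  define g where "g = (\<lambda>(i, k). real (cnt 1 (factor w i k)))"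
  have sum_eq: "(\<Sum>(i, k)\<in>DF_zero w. (1 + real (cnt 1 (factor w i k))) powr \<alpha>) =
      (\<Sum>s\<in>DF_zero w. (1 + g s) powr \<alpha>)"
    by (simp add: g_def split_beta)
  have "real (cnt 1 w) \<le> sum g (DF_zero w)"
    using cnt_le_sum_DF_zero[OF w(1,2)] unfolding g_def
    by (simp add: of_nat_sum[symmetric] split_beta del: of_nat_sum)
  then have le: "(1 + real (cnt 1 w)) powr \<alpha> \<le> (1 + sum g (DF_zero w)) powr \<alpha>"
    using a by (intro powr_mono2) auto
  have g: "0 \<le> g s" for s by (simp add: g_def split_beta)
  have "(1 + sum g (DF_zero w)) powr \<alpha> \<le> (\<Sum>s\<in>DF_zero w. (1 + g s) powr \<alpha>)"
    by (rule powr_one_plus_sum_le[OF a finite_DF_zero DF_zero_nonempty[OF w]]) (rule g)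
  then show "(1 + real (cnt 1 w)) powr \<alpha> \<le> (\<Sum>(i, k)\<in>DF_zero w. (1 + real (cnt 1 (factor w i k))) powr \<alpha>)"
    using le sum_eq by linarith
  assume "2 \<le> card (DF_zero w)"
  then have "(1 + sum g (DF_zero w)) powr \<alpha> < (\<Sum>s\<in>DF_zero w. (1 + g s) powr \<alpha>)"
    by (rule powr_one_plus_sum_less[OF a finite_DF_zero]) (rule g)
  then show "(1 + real (cnt 1 w)) powr \<alpha> < (\<Sum>(i, k)\<in>DF_zero w. (1 + real (cnt 1 (factor w i k))) powr \<alpha>)"
    using le sum_eq by linarith
qed

lemma sum_DF_zero_le_phi:
  "(\<Sum>(i, k)\<in>DF_zero w. (1 + real (cnt 1 (factor w i k))) powr \<alpha>) \<le> phi \<alpha> w"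
  unfolding phi_def by (rule sum_mono2[OF finite_DF]) (auto simp: DF_zero_def)

lemma phi_lower_bound:
  assumes "0 < \<alpha>" "\<alpha> < 1" "set w \<subseteq> {1, 2}" "height w (length w) = 0" "w \<noteq> []"
  shows "(1 + real (cnt 1 w)) powr \<alpha> \<le> phi \<alpha> w"
  using powr_cnt_le_sum_DF_zero(1)[OF assms] sum_DF_zero_le_phi by (rule order_trans)

lemma DF_subset_DF_zero_if_phi_le:
  assumes "phi \<alpha> w \<le> (\<Sum>(i, k)\<in>DF_zero w. (1 + real (cnt 1 (factor w i k))) powr \<alpha>)"
  shows "DF w \<subseteq> DF_zero w"
proof
  fix s assume s: "s \<in> DF w"
  define f where "f = (\<lambda>(i, k). (1 + real (cnt 1 (factor w i k))) powr \<alpha>)"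
  show "s \<in> DF_zero w"
  proof (rule ccontr)
    assume "s \<notin> DF_zero w"
    then have "f s + sum f (DF_zero w) = sum f (insert s (DF_zero w))"
      using finite_DF_zero by simp
    also have "\<dots> \<le> phi \<alpha> w"
      unfolding phi_def f_def using s by (intro sum_mono2[OF finite_DF]) (auto simp: DF_zero_def)
    moreover have "0 < f s" by (simp add: f_def split_beta)
    ultimately show False using assms by (simp add: f_def)
  qed
qed

lemma DF_singleton_eq_whole_word:
  assumes w: "set w \<subseteq> {1, 2}" "height w (length w) = 0" "w \<noteq> []" and DF: "DF w = {s}"
  shows "s = (0, length w)"
proof -
  have covered: "fst s \<le> p \<and> p < fst s + snd s" if "p < length w" for p
    by (rule DF_covers[OF w(1,2) that]) (use DF in auto)
  have "maximal_dyck_factor w (fst s) (snd s)"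
    using DF mem_DF_iff[of "fst s" "snd s" w] by simp
  then have "fst s + snd s \<le> length w"
    using dyck_factor_bounds by (auto simp: maximal_dyck_factor_def)
  then show ?thesis
    using covered[of 0] covered[of "length w - 1"] w(3) by (cases s) auto
qed

text \<open>Equality forces a single maximal Dyck factor: every factor of non-zero height would
  contribute a positive term, and two factors of height zero a strict loss by concavity.\<close>

lemma phi_eq_lower_bound_iff:
  assumes a: "0 < \<alpha>" "\<alpha> < 1" and w: "set w \<subseteq> {1, 2}" "height w (length w) = 0" "w \<noteq> []"
  shows "phi \<alpha> w = (1 + real (cnt 1 w)) powr \<alpha> \<longleftrightarrow> DF w = {(0, length w)}"
proof
  assume "DF w = {(0, length w)}"
  then show "phi \<alpha> w = (1 + real (cnt 1 w)) powr \<alpha>"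
    by (simp add: phi_def factor_def)
next
  assume eq: "phi \<alpha> w = (1 + real (cnt 1 w)) powr \<alpha>"
  then have "DF w \<subseteq> DF_zero w"
    using powr_cnt_le_sum_DF_zero(1)[OF a w] by (intro DF_subset_DF_zero_if_phi_le[where \<alpha> = \<alpha>]) simp
  moreover have "card (DF_zero w) = 1"
  proof (rule ccontr)
    assume "card (DF_zero w) \<noteq> 1"
    moreover have "card (DF_zero w) \<noteq> 0"
      using DF_zero_nonempty[OF w] finite_DF_zero by simp
    ultimately have "2 \<le> card (DF_zero w)" by linarith
    then show False
      using powr_cnt_le_sum_DF_zero(2)[OF a w] sum_DF_zero_le_phi[of w \<alpha>] eq by linarith
  qed
  then obtain s0 where "DF_zero w = {s0}"
    by (rule card_1_singletonE)
  moreover have "DF_zero w \<subseteq> DF w" by (auto simp: DF_zero_def)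
  ultimately have "DF w = {s0}" using \<open>DF w \<subseteq> DF_zero w\<close> by auto
  then show "DF w = {(0, length w)}"
    using DF_singleton_eq_whole_word[OF w] by simp
qed

section \<open>Alternating words\<close>

lemma mismatches_eq_0_iff:
  "mismatches w = 0 \<longleftrightarrow> (\<forall>i. Suc i < length w \<longrightarrow> w ! i \<noteq> w ! Suc i)"
proof -
  have "finite {i. i + 1 < length w \<and> w ! i = w ! (i + 1)}"
    by (rule finite_subset[of _ "{..<length w}"]) auto
  then show ?thesis by (auto simp: mismatches_def)
qed

lemma height_Suc_Suc_eq:
  assumes "set w \<subseteq> {1, 2}" "Suc i < length w" "w ! i \<noteq> w ! Suc i"
  shows "height w (Suc (Suc i)) = height w i"
  using height_Suc_cases[OF assms(1), of i] height_Suc_cases[OF assms(1), of "Suc i"] assms(2,3)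
  by auto

lemma height_alternating:
  assumes w: "set w \<subseteq> {1, 2}" and alt: "\<forall>i. Suc i < length w \<longrightarrow> w ! i \<noteq> w ! Suc i"
    and "i \<le> length w"
  shows "height w i = (if even i then 0 else height w 1)"
  using assms(3)
proof (induction i rule: less_induct)
  case (less i)
  show ?case
  proof (cases i)
    case (Suc j)
    show ?thesis
    proof (cases j)
      case (Suc l)
      then have "height w i = height w l"
        using height_Suc_Suc_eq[OF w, of l] alt less.prems \<open>i = Suc j\<close> by auto
      then show ?thesis
        using less.IH[of l] less.prems \<open>i = Suc j\<close> Suc by auto
    qed (use Suc in simp)
  qed simp
qed

lemma abs_height_le_dyck_factor:
  assumes "dyck_factor w i k" "t \<in> {1..k}"
  shows "\<bar>height w i\<bar> \<le> \<bar>height w (i + t)\<bar>"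
  using assms(1) unfolding dyck_factor_def
proof
  assume "pos_dyck_factor w i k"
  then have "0 \<le> height w i" "height w i \<le> height w (i + t)"
    using assms(2) unfolding pos_dyck_factor_iff_height by blast+
  then show ?thesis by linarith
next
  assume "neg_dyck_factor w i k"
  then have "height w i \<le> 0" "height w (i + t) \<le> height w i"
    using assms(2) unfolding neg_dyck_factor_iff_height by blast+
  then show ?thesis by linarith
qed

lemma maximal_dyck_factor_whole_word:
  assumes "dyck_factor w 0 (length w)"
  shows "maximal_dyck_factor w 0 (length w)"
  unfolding maximal_dyck_factor_def
proof (intro conjI notI)
  show "dyck_factor w 0 (length w)" by (fact assms)
  assume "\<exists>i' k'. dyck_factor w i' k' \<and> height w i' = height w 0 \<and> i' \<le> 0 \<and>
      0 + length w \<le> i' + k' \<and> (i', k') \<noteq> (0, length w)"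
  then obtain i' k' where "dyck_factor w i' k'" "i' \<le> 0" "0 + length w \<le> i' + k'"
    "(i', k') \<noteq> (0, length w)"
    by blast
  then show False using dyck_factor_bounds[of w i' k'] by simp
qed

lemma DF_eq_singleton_if_all_heights_zero:
  assumes whole: "dyck_factor w 0 (length w)"
    and zero: "\<And>i k. dyck_factor w i k \<Longrightarrow> height w i = 0"
  shows "DF w = {(0, length w)}"
proof
  show "DF w \<subseteq> {(0, length w)}"
  proof
    fix s assume "s \<in> DF w"
    then obtain i k where s: "s = (i, k)" and max: "maximal_dyck_factor w i k"
      by (cases s) auto
    then have "dyck_factor w i k" by (simp add: maximal_dyck_factor_def)
    then have "0 = i \<and> length w = k"
      using maximal_dyck_factor_unique[OF max whole] zero[of i k] dyck_factor_bounds[of w i k]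
      by simp
    then show "s \<in> {(0, length w)}" using s by simp
  qed
  show "{(0, length w)} \<subseteq> DF w"
    using maximal_dyck_factor_whole_word[OF whole] by simp
qed

lemma height_zero_if_dyck_factor_alternating:
  assumes w: "set w \<subseteq> {1, 2}" and alt: "\<forall>i. Suc i < length w \<longrightarrow> w ! i \<noteq> w ! Suc i"
    and dyck: "dyck_factor w i k"
  shows "height w i = 0"
proof (rule ccontr)
  assume nonzero: "height w i \<noteq> 0"
  have bounds: "i + 1 \<le> length w" "1 \<in> {1..k}"
    using dyck_factor_bounds[OF dyck] by auto
  then have "height w i = (if even i then 0 else height w 1)"
    "height w (i + 1) = (if even (i + 1) then 0 else height w 1)"
    using height_alternating[OF w alt] by simp_all
  then have "\<bar>height w i\<bar> > \<bar>height w (i + 1)\<bar>"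
    using nonzero by (auto split: if_splits)
  then show False
    using abs_height_le_dyck_factor[OF dyck bounds(2)] by simp
qed

lemma dyck_factor_whole_word_alternating:
  assumes w: "set w \<subseteq> {1, 2}" "height w (length w) = 0" "w \<noteq> []"
    and alt: "\<forall>i. Suc i < length w \<longrightarrow> w ! i \<noteq> w ! Suc i"
  shows "dyck_factor w 0 (length w)"
proof -
  have heights: "height w t = 0 \<or> height w t = height w 1" if "t \<le> length w" for t
    using height_alternating[OF w(1) alt that] by simp
  have "1 \<le> length w" using w(3) by (simp add: Suc_leI)
  then consider "height w 1 = 1" | "height w 1 = -1"
    using height_Suc_cases[OF w(1), of 0] w(3) by auto
  then show ?thesis
  proof cases
    case 1
    then have "0 \<le> height w t" if "t \<le> length w" for t
      using heights[OF that] by auto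
    then have "pos_dyck_factor w 0 (length w)"
      unfolding pos_dyck_factor_iff_height using w(2) \<open>1 \<le> length w\<close> by auto
    then show ?thesis by (simp add: dyck_factor_def)
  next
    case 2
    then have "height w t \<le> 0" if "t \<le> length w" for t
      using heights[OF that] by auto
    then have "neg_dyck_factor w 0 (length w)"
      unfolding neg_dyck_factor_iff_height using w(2) \<open>1 \<le> length w\<close> by auto
    then show ?thesis by (simp add: dyck_factor_def)
  qed
qed

text \<open>A repeated letter inside a positive Dyck word forces the height to reach 2; the first
  up-step from height 1 to 2 then opens a positive Dyck factor of height 1.\<close>

lemma pos_dyck_factor_nonzero_height_if_repeat:
  assumes w: "set w \<subseteq> {1, 2}" and dyck: "pos_dyck_factor w 0 (length w)"
    and p: "Suc p < length w" "w ! p = w ! Suc p"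
  shows "\<exists>i k. pos_dyck_factor w i k \<and> height w i \<noteq> 0"
proof -
  have nonneg: "0 \<le> height w t" if "t \<le> length w" for t
    using dyck that unfolding pos_dyck_factor_iff_height by (cases t) auto
  have final: "height w (length w) = 0"
    using dyck unfolding pos_dyck_factor_iff_height by simp
  have "2 \<le> height w p \<or> 2 \<le> height w (Suc (Suc p))"
    using height_Suc_cases[OF w, of p] height_Suc_cases[OF w, of "Suc p"] p
      nonneg[of p] nonneg[of "Suc (Suc p)"] by auto
  moreover have "p \<le> length w" "Suc (Suc p) \<le> length w" using p by auto
  ultimately have "\<exists>j. j \<le> length w \<and> 2 \<le> height w j" by blast
  then obtain j where j: "j \<le> length w" "2 \<le> height w j"
    and first: "\<And>j'. j' < j \<Longrightarrow> \<not> (j' \<le> length w \<and> 2 \<le> height w j')"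
    using exists_least_iff[of "\<lambda>j. j \<le> length w \<and> 2 \<le> height w j"] by blast
  then obtain q where q: "j = Suc q" by (cases j) auto
  have "height w q < 2" using first[of q] q j by auto
  then have "height w q = 1" "height w (Suc q) = height w q + 1"
    using height_Suc_cases[OF w, of q] nonneg[of q] q j by auto
  then obtain k where "pos_dyck_factor w q k"
    using pos_dyck_factor_from_up_step[OF w, of q "length w"] q j final by auto
  then show ?thesis using \<open>height w q = 1\<close> by auto
qed

lemma alternating_if_DF_singleton:
  assumes w: "set w \<subseteq> {1, 2}" and DF: "DF w = {(0, length w)}"
  shows "\<forall>i. Suc i < length w \<longrightarrow> w ! i \<noteq> w ! Suc i"
proof (intro allI impI notI)
  fix p assume p: "Suc p < length w" "w ! p = w ! Suc p"
  have "dyck_factor w 0 (length w)"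
    using DF mem_DF_iff[of 0 "length w" w] by (simp add: maximal_dyck_factor_def)
  then have "\<exists>i k. dyck_factor w i k \<and> height w i \<noteq> 0" (is ?nonzero)
    unfolding dyck_factor_def[of w 0]
  proof
    assume "pos_dyck_factor w 0 (length w)"
    then show ?nonzero
      using pos_dyck_factor_nonzero_height_if_repeat[OF w _ p] by (auto simp: dyck_factor_def)
  next
    assume "neg_dyck_factor w 0 (length w)"
    moreover have "swap_letters w ! p = swap_letters w ! Suc p"
      using p by (simp add: swap_letters_def)
    ultimately show ?nonzero
      using pos_dyck_factor_nonzero_height_if_repeat[OF set_swap_letters[OF w], of p] p
      by (auto simp: dyck_factor_def neg_dyck_factor_iff_swap_letters)
  qed
  then obtain i k where "dyck_factor w i k" "height w i \<noteq> 0" by blast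
  then obtain i' k' where "maximal_dyck_factor w i' k'" "height w i' \<noteq> 0"
    by (metis maximal_dyck_factor_exists)
  then have "(i', k') \<in> DF w" "height w i' \<noteq> 0" by simp_all
  then show False using DF by auto
qed

lemma DF_eq_singleton_iff:
  assumes "set w \<subseteq> {1, 2}" "height w (length w) = 0" "w \<noteq> []"
  shows "DF w = {(0, length w)} \<longleftrightarrow> mismatches w = 0"
  using DF_eq_singleton_if_all_heights_zero[OF dyck_factor_whole_word_alternating[OF assms]]
    height_zero_if_dyck_factor_alternating[OF assms(1)] alternating_if_DF_singleton[OF assms(1)]
  by (auto simp: mismatches_eq_0_iff)

theorem lemma2:
  fixes \<alpha> :: real and n :: nat and w :: "nat list"
  assumes "0 < \<alpha>" and "\<alpha> < 1" and "1 \<le> n" and "w \<in> configs (2 * n)"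
  shows "(1 + real n) powr \<alpha> \<le> phi \<alpha> w \<and> phi \<alpha> w \<le> (2 * real n) powr (\<alpha> + 1)
    \<and> (phi \<alpha> w = (1 + real n) powr \<alpha> \<longleftrightarrow> mismatches w = 0)"
proof -
  note w = mem_configsD[OF assms(4)]
  have "w \<noteq> []" using w(2) assms(3) by auto
  have "phi \<alpha> w \<le> 2 * real n * (1 + real n) powr \<alpha>"
    using phi_le_length_mult[of \<alpha> w] assms(1) w by simp
  also have "\<dots> \<le> 2 * real n * (2 * real n) powr \<alpha>"
    using assms(1,3) by (intro mult_left_mono powr_mono2) auto
  also have "\<dots> = (2 * real n) powr (\<alpha> + 1)"
    using assms(3) by (simp add: powr_add)
  finally show ?thesis
    using phi_lower_bound[OF assms(1,2) w(1,4) \<open>w \<noteq> []\<close>]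
      phi_eq_lower_bound_iff[OF assms(1,2) w(1,4) \<open>w \<noteq> []\<close>]
      DF_eq_singleton_iff[OF w(1,4) \<open>w \<noteq> []\<close>] w(3)
    by simp
qed

end
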